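(* Assume that $\Omega$ is a slice domain or a product domain. Let $f$ be a tame slice regular function on $\Omega$ with $N(f)\not\equiv0$. Then, for every $g\in\mathcal{S}^0(\Omega)$, if $f\cdot g\equiv0$ or $g\cdot f\equiv0$, then $g\equiv0$.
   Context: Let $A$ be a finite-dimensional real algebra with unit $1$ ($\mathbb{R}$ identified with $\mathbb{R}1$) which is alternative (the associator $(x,y,z)=(xy)z-x(yz)$ is alternating), with a $^*$-involution $x\mapsto x^c$ (real linear, $(x^c)^c=x$, $(xy)^c=y^cx^c$, $r^c=r$ for $r\in\mathbb{R}$). Let $t(x)=x+x^c$, $n(x)=xx^c$, $\mathbb{S}_A=\{J\in A:t(J)=0,n(J)=1\}$ (assumed non-empty), $Q_A=\mathbb{R}\cup\{x:t(x),n(x)\in\mathbb{R},4n(x)>t(x)^2\}$; every $x\in Q_A$ is $\alpha+\beta J$ with $\alpha,\beta\in\mathbb{R}$, $J\in\mathbb{S}_A$. Let $D\subseteq\mathbb{C}$ be open, non-empty, invariant under conjugation, and $\Omega=\{\alpha+\beta J:\alpha+i\beta\in D,J\in\mathbb{S}_A\}$; $\Omega$ is a slice domain if $D$ is connected and meets $\mathbb{R}$, a product domain if $D\cap\mathbb{R}=\emptyset$ and $D$ has two connected components exchanged by conjugation. $A_{\mathbb{C}}=\{a+\imath b\}$ with $(a+\imath b)(a'+\imath b')=aa'-bb'+\imath(ab'+ba')$, $\overline{a+\imath b}=a-\imath b$, $(a+\imath b)^c=a^c+\imath b^c$. A stem function $F=F_1+\imath F_2:D\to A_{\mathbb{C}}$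 satisfies $F(\bar z)=\overline{F(z)}$ and induces $f=\mathcal{I}(F)$, $f(\alpha+\beta J)=F_1(\alpha+i\beta)+JF_2(\alpha+i\beta)$. $\mathcal{S}^0(\Omega)$ is the set of slice functions induced by continuous stem functions; $f$ is slice regular if $F$ is $\mathscr{C}^1$ and $\frac12\big(\frac{\partial F}{\partial\alpha}+\imath\frac{\partial F}{\partial\beta}\big)\equiv0$. Slice product $f\cdot g=\mathcal{I}(FG)$, $f^c=\mathcal{I}(F^c)$ ($F^c(z)=F(z)^c$), $N(f)=f\cdot f^c$; $f$ is slice preserving if $F_1,F_2$ are real valued, tame if $N(f)$ is slice preserving and $N(f)=N(f^c)$. *)

theory Defs
  imports "HOL-Analysis.Analysis"
begin

text \<open>The algebra A is modelled by a finite-dimensional real vector space type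
 'a (class euclidean_space) together with a multiplication mul, a unit one
 (R is identified with R one via r \<mapsto> r *R one) and a *-involution cj.\<close>

definition assoc_alg :: "('a \<Rightarrow> 'a \<Rightarrow> 'a::real_vector) \<Rightarrow> 'a \<Rightarrow> 'a \<Rightarrow> 'a \<Rightarrow> 'a" where
  "assoc_alg mul x y z = mul (mul x y) z - mul x (mul y z)"

definition alt_star_alg ::
  "('a::euclidean_space \<Rightarrow> 'a \<Rightarrow> 'a) \<Rightarrow> 'a \<Rightarrow> ('a \<Rightarrow> 'a) \<Rightarrow> bool" where
  "alt_star_alg mul one cj \<longleftrightarrow>
     bilinear mul \<and> one \<noteq> 0 \<and>
     (\<forall>x. mul one x = x \<and> mul x one = x) \<and>
     (\<forall>x y. assoc_alg mul x x y = 0 \<and> assoc_alg mul x y x = 0 \<and> assoc_alg mul y x x = 0) \<and>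
     linear cj \<and> (\<forall>x. cj (cj x) = x) \<and>
     (\<forall>x y. cj (mul x y) = mul (cj y) (cj x)) \<and>
     (\<forall>r. cj (r *\<^sub>R one) = r *\<^sub>R one)"

definition trA :: "('a::real_vector \<Rightarrow> 'a) \<Rightarrow> 'a \<Rightarrow> 'a" where
  "trA cj x = x + cj x"

definition nA :: "('a \<Rightarrow> 'a \<Rightarrow> 'a) \<Rightarrow> ('a \<Rightarrow> 'a) \<Rightarrow> 'a \<Rightarrow> 'a" where
  "nA mul cj x = mul x (cj x)"

definition sphS :: "('a::real_vector \<Rightarrow> 'a \<Rightarrow> 'a) \<Rightarrow> 'a \<Rightarrow> ('a \<Rightarrow> 'a) \<Rightarrow> 'a set" where
  "sphS mul one cj = {J. trA cj J = 0 \<and> nA mul cj J = one}"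

definition admissible_D :: "complex set \<Rightarrow> bool" where
  "admissible_D D \<longleftrightarrow> open D \<and> D \<noteq> {} \<and> (\<forall>z\<in>D. cnj z \<in> D)"

definition slice_domain_D :: "complex set \<Rightarrow> bool" where
  "slice_domain_D D \<longleftrightarrow> connected D \<and> D \<inter> \<real> \<noteq> {}"

definition product_domain_D :: "complex set \<Rightarrow> bool" where
  "product_domain_D D \<longleftrightarrow> D \<inter> \<real> = {} \<and>
     (\<exists>C. components D = {C, cnj ` C} \<and> C \<noteq> cnj ` C)"

text \<open>A_C = A + i A is represented by pairs (a, b) meaning a + i b.\<close>
definition ac_mul :: "('a::real_vector \<Rightarrow> 'a \<Rightarrow> 'a) \<Rightarrow> 'a \<times> 'a \<Rightarrow> 'a \<times> 'a \<Rightarrow> 'a \<times> 'a" where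
  "ac_mul mul p q = (mul (fst p) (fst q) - mul (snd p) (snd q),
                     mul (fst p) (snd q) + mul (snd p) (fst q))"

definition ac_cj :: "('a \<Rightarrow> 'a) \<Rightarrow> 'a \<times> 'a \<Rightarrow> 'a \<times> 'a" where
  "ac_cj cj p = (cj (fst p), cj (snd p))"

definition ac_i :: "'a::real_vector \<times> 'a \<Rightarrow> 'a \<times> 'a" where
  "ac_i p = (- snd p, fst p)"

text \<open>Stem functions F = F1 + i F2 : D \<rightarrow> A_C with F(conj z) = conj(F z).\<close>
definition stem_on :: "complex set \<Rightarrow> (complex \<Rightarrow> 'a::real_vector \<times> 'a) \<Rightarrow> bool" where
  "stem_on D F \<longleftrightarrow> (\<forall>z\<in>D. F (cnj z) = (fst (F z), - snd (F z)))"

text \<open>Stem functions inducing elements of S^0(Omega): continuous stem functions.\<close>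
definition cont_stem_on :: "complex set \<Rightarrow> (complex \<Rightarrow> 'a::real_normed_vector \<times> 'a) \<Rightarrow> bool" where
  "cont_stem_on D F \<longleftrightarrow> stem_on D F \<and> continuous_on D F"

text \<open>Stem functions of slice regular functions: C^1 stem functions with
  (1/2)(dF/d alpha + i dF/d beta) = 0, where z = alpha + i beta.\<close>
definition regular_stem_on :: "complex set \<Rightarrow> (complex \<Rightarrow> 'a::real_normed_vector \<times> 'a) \<Rightarrow> bool" where
  "regular_stem_on D F \<longleftrightarrow> stem_on D F \<and>
     (\<exists>DF. (\<forall>z\<in>D. (F has_derivative DF z) (at z)) \<and>
           (\<forall>h. continuous_on D (\<lambda>z. DF z h)) \<and>
           (\<forall>z\<in>D. (1/2::real) *\<^sub>R (DF z 1 + ac_i (DF z \<i>)) = 0))"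

text \<open>Value of the induced slice function I(F) at the point alpha + beta J, z = alpha + i beta.\<close>
definition slice_val :: "('a \<Rightarrow> 'a \<Rightarrow> 'a::real_vector) \<Rightarrow> (complex \<Rightarrow> 'a \<times> 'a) \<Rightarrow> complex \<Rightarrow> 'a \<Rightarrow> 'a" where
  "slice_val mul F z J = fst (F z) + mul J (snd (F z))"

definition vanishes_on ::
  "('a::real_vector \<Rightarrow> 'a \<Rightarrow> 'a) \<Rightarrow> 'a \<Rightarrow> ('a \<Rightarrow> 'a) \<Rightarrow> complex set \<Rightarrow> (complex \<Rightarrow> 'a \<times> 'a) \<Rightarrow> bool" where
  "vanishes_on mul one cj D F \<longleftrightarrow> (\<forall>z\<in>D. \<forall>J\<in>sphS mul one cj. slice_val mul F z J = 0)"

definition same_slice_on ::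
  "('a::real_vector \<Rightarrow> 'a \<Rightarrow> 'a) \<Rightarrow> 'a \<Rightarrow> ('a \<Rightarrow> 'a) \<Rightarrow> complex set \<Rightarrow> (complex \<Rightarrow> 'a \<times> 'a) \<Rightarrow> (complex \<Rightarrow> 'a \<times> 'a) \<Rightarrow> bool" where
  "same_slice_on mul one cj D F G \<longleftrightarrow>
     (\<forall>z\<in>D. \<forall>J\<in>sphS mul one cj. slice_val mul F z J = slice_val mul G z J)"

definition stem_prod :: "('a::real_vector \<Rightarrow> 'a \<Rightarrow> 'a) \<Rightarrow> (complex \<Rightarrow> 'a \<times> 'a) \<Rightarrow> (complex \<Rightarrow> 'a \<times> 'a) \<Rightarrow> complex \<Rightarrow> 'a \<times> 'a" where
  "stem_prod mul F G = (\<lambda>z. ac_mul mul (F z) (G z))"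

definition stem_cj :: "('a \<Rightarrow> 'a) \<Rightarrow> (complex \<Rightarrow> 'a \<times> 'a) \<Rightarrow> complex \<Rightarrow> 'a \<times> 'a" where
  "stem_cj cj F = (\<lambda>z. ac_cj cj (F z))"

definition stem_N :: "('a::real_vector \<Rightarrow> 'a \<Rightarrow> 'a) \<Rightarrow> ('a \<Rightarrow> 'a) \<Rightarrow> (complex \<Rightarrow> 'a \<times> 'a) \<Rightarrow> complex \<Rightarrow> 'a \<times> 'a" where
  "stem_N mul cj F = stem_prod mul F (stem_cj cj F)"

definition slice_preserving_stem :: "'a::real_vector \<Rightarrow> complex set \<Rightarrow> (complex \<Rightarrow> 'a \<times> 'a) \<Rightarrow> bool" where
  "slice_preserving_stem one D F \<longleftrightarrow>
     (\<forall>z\<in>D. fst (F z) \<in> range (\<lambda>r. r *\<^sub>R one) \<and> snd (F z) \<in> range (\<lambda>r. r *\<^sub>R one))"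

definition tame_stem ::
  "('a::real_vector \<Rightarrow> 'a \<Rightarrow> 'a) \<Rightarrow> 'a \<Rightarrow> ('a \<Rightarrow> 'a) \<Rightarrow> complex set \<Rightarrow> (complex \<Rightarrow> 'a \<times> 'a) \<Rightarrow> bool" where
  "tame_stem mul one cj D F \<longleftrightarrow>
     slice_preserving_stem one D (stem_N mul cj F) \<and>
     same_slice_on mul one cj D (stem_N mul cj F) (stem_N mul cj (stem_cj cj F))"

end

theory Submission
  imports Defs "HOL-Complex_Analysis.Complex_Analysis"
begin

(* Since N(f) is slice preserving, the stem function of N(f) takes values in C one, and its
   C-coordinate c is a holomorphic function on D with c (cnj z) = cnj (c z). Wherever
   N(F)(z) = F(z) F(z)^c = F(z)^c F(z) is nonzero, F(z)^c / N(F)(z) is a two-sided inverse of F(z)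
   in the complexified algebra A_C, which is again alternative, and invertible elements of an
   alternative algebra are not zero divisors. Hence if f g or g f vanishes and G(z1) \<noteq> 0, then c
   vanishes on the open set where G \<noteq> 0, so by the identity principle on the component of z1,
   and by conjugation symmetry on the other component of a product domain, c vanishes on D,
   contradicting N(f) \<noteq> 0. Throughout, a slice function vanishes iff its stem function does,
   because S_A is non-empty and closed under J \<mapsto> -J. *)

lemma real_vector_double_cancel:
  fixes a b :: "'b::real_vector"
  assumes "a + a = b + b"
  shows "a = b"
proof -
  have "(2::real) *\<^sub>R a = (2::real) *\<^sub>R b" using assms by (simp add: scaleR_2)
  thus ?thesis by simp
qed

definition alternative :: "('b \<Rightarrow> 'b \<Rightarrow> 'b) \<Rightarrow> bool" where
  "alternative m \<longleftrightarrow> (\<forall>x y. m (m x x) y = m x (m x y) \<and> m y (m x x) = m (m y x) x)"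

lemmas bilinear_simps = bilinear_ladd bilinear_radd bilinear_lmul bilinear_rmul
  bilinear_lneg bilinear_rneg bilinear_lzero bilinear_rzero bilinear_lsub bilinear_rsub

lemma alternative_left_linearized:
  assumes m: "bilinear m" and alt: "alternative m"
  shows "m (m x y) z + m (m y x) z = m x (m y z) + m y (m x z)"
proof -
  have "m (m (x + y) (x + y)) z = m (x + y) (m (x + y) z)"
    using alt by (simp add: alternative_def)
  thus ?thesis using alt by (simp add: alternative_def bilinear_simps[OF m] algebra_simps)
qed

lemma alternative_right_linearized:
  assumes m: "bilinear m" and alt: "alternative m"
  shows "m x (m y z) + m x (m z y) = m (m x y) z + m (m x z) y"
proof -
  have "m x (m (y + z) (y + z)) = m (m x (y + z)) (y + z)"
    using alt by (simp add: alternative_def)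
  thus ?thesis using alt by (simp add: alternative_def bilinear_simps[OF m] algebra_simps)
qed

lemma bilinear_ac_mul:
  assumes "bilinear m"
  shows "bilinear (ac_mul m)"
  unfolding bilinear_def
  by (auto intro!: linearI simp: ac_mul_def bilinear_simps[OF assms] algebra_simps)

lemma alternative_ac_mul:
  assumes m: "bilinear m" and alt: "alternative m"
  shows "alternative (ac_mul m)"
  unfolding alternative_def
proof (intro allI conjI)
  fix p r :: "'a \<times> 'a"
  obtain p1 p2 r1 r2 where pr: "p = (p1, p2)" "r = (r1, r2)" by fastforce
  note L = alternative_left_linearized[OF m alt] and R = alternative_right_linearized[OF m alt]
  show "ac_mul m (ac_mul m p p) r = ac_mul m p (ac_mul m p r)"
    using L[of p1 p2 r2] L[of p1 p2 r1] alt
    by (simp add: pr ac_mul_def alternative_def bilinear_simps[OF m] algebra_simps)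
  show "ac_mul m r (ac_mul m p p) = ac_mul m (ac_mul m r p) p"
    using R[of r2 p1 p2] R[of r1 p1 p2] alt
    by (simp add: pr ac_mul_def alternative_def bilinear_simps[OF m] algebra_simps)
qed

lemma alternative_invertible_left_cancel:
  fixes m :: "'b::real_vector \<Rightarrow> 'b \<Rightarrow> 'b"
  assumes m: "bilinear m" and alt: "alternative m"
    and unit_left: "\<And>g. m e g = g" and unit_right: "\<And>g. m g e = g"
    and xu: "m x u = e" and ux: "m u x = e" and xg: "m x g = 0"
  shows "g = 0"
proof -
  note simps = bilinear_simps[OF m]
  have left_alt: "m (m a a) h = m a (m a h)" and right_alt: "m h (m a a) = m (m h a) a" for a h
    using alt by (simp_all add: alternative_def)
  \<comment> \<open>Linearizing left alternativity at u, x gives P + Q = 2; then m x \<circ> Q = m x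
    gives P (P g) = P g, whereas m x g = 0 forces P g = 2 g.\<close>
  define P where "P h = m x (m u h)" for h
  define Q where "Q h = m u (m x h)" for h
  have PQ: "P h + Q h = h + h" for h
    using alternative_left_linearized[OF m alt, of u x h] by (simp add: P_def Q_def ux xu unit_left add.commute)
  have xQ: "m x (Q h) = m x h" for h
  proof -
    have "m (m x x) u = x" using left_alt[of x u] by (simp add: xu unit_right)
    moreover have "m u (m x x) = x" using right_alt[of u x] by (simp add: ux unit_left)
    ultimately have "m x h + m x h = m (m x x) (m u h) + m u (m (m x x) h)"
      using alternative_left_linearized[OF m alt, of "m x x" u h] by simp
    also have "m (m x x) (m u h) = m x h + m x h - m x (Q h)"
    proof -
      have "m x (m u h) = h + h - Q h" using PQ[of h] by (simp add: P_def algebra_simps)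
      thus ?thesis by (simp add: left_alt simps)
    qed
    also have "m u (m (m x x) h) = m x h + m x h - m x (Q h)"
      using PQ[of "m x h"] by (simp add: left_alt P_def Q_def algebra_simps eq_diff_eq)
    finally have "m x (Q h) + m x (Q h) = m x h + m x h" by (simp add: algebra_simps)
    thus ?thesis by (rule real_vector_double_cancel)
  qed
  have Pg: "P g = g + g" using PQ[of g] by (simp add: Q_def xg simps)
  have "P (P g) = P g" using xQ[of "m u g"] by (simp add: P_def Q_def)
  hence "P g = 0" using Pg by (simp add: P_def simps)
  thus "g = 0" using Pg real_vector_double_cancel[of g 0] by simp
qed

definition ac_cscale :: "complex \<Rightarrow> 'b::real_vector \<times> 'b \<Rightarrow> 'b \<times> 'b" where
  "ac_cscale w p = (Re w *\<^sub>R fst p - Im w *\<^sub>R snd p, Re w *\<^sub>R snd p + Im w *\<^sub>R fst p)"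

lemma ac_cscale_ac_cscale: "ac_cscale w (ac_cscale v p) = ac_cscale (w * v) p"
  by (simp add: ac_cscale_def algebra_simps)

lemma ac_cscale_one [simp]: "ac_cscale 1 p = p"
  by (simp add: ac_cscale_def)

lemma ac_mul_cscale_left:
  "bilinear m \<Longrightarrow> ac_mul m (ac_cscale w p) q = ac_cscale w (ac_mul m p q)"
  by (simp add: ac_cscale_def ac_mul_def bilinear_simps algebra_simps)

lemma ac_mul_cscale_right:
  "bilinear m \<Longrightarrow> ac_mul m p (ac_cscale w q) = ac_cscale w (ac_mul m p q)"
  by (simp add: ac_cscale_def ac_mul_def bilinear_simps algebra_simps)

lemma real_linear_complex_multiplication:
  fixes \<phi> :: "complex \<Rightarrow> complex"
  assumes lin: "linear \<phi>" and i: "\<phi> \<i> = \<i> * \<phi> 1"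
  shows "\<phi> h = \<phi> 1 * h"
proof -
  have "h = Re h *\<^sub>R 1 + Im h *\<^sub>R \<i>" by (simp add: complex_eq_iff)
  hence "\<phi> h = \<phi> (Re h *\<^sub>R 1 + Im h *\<^sub>R \<i>)" by simp
  also have "\<dots> = Re h *\<^sub>R \<phi> 1 + Im h *\<^sub>R (\<i> * \<phi> 1)"
    by (simp add: linear_add[OF lin] linear_scale[OF lin] i)
  also have "\<dots> = \<phi> 1 * h" by (simp add: scaleR_conv_of_real complex_eq_iff algebra_simps)
  finally show ?thesis .
qed

text \<open>Unlike regular_stem_on, no continuity of the derivative is required.\<close>
definition ac_holomorphic_at :: "(complex \<Rightarrow> 'b::real_normed_vector \<times> 'b) \<Rightarrow> complex \<Rightarrow> bool" where
  "ac_holomorphic_at H z \<longleftrightarrow> (\<exists>DH. (H has_derivative DH) (at z) \<and> DH 1 + ac_i (DH \<i>) = 0)"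

lemma regular_stem_on_ac_holomorphic_at:
  "regular_stem_on D F \<Longrightarrow> z \<in> D \<Longrightarrow> ac_holomorphic_at F z"
  unfolding regular_stem_on_def ac_holomorphic_at_def by auto

lemma ac_i_add: "ac_i (p + q) = ac_i p + ac_i q"
  by (simp add: ac_i_def algebra_simps)

lemma ac_mul_ac_i_left: "bilinear m \<Longrightarrow> ac_mul m (ac_i p) q = ac_i (ac_mul m p q)"
  by (simp add: ac_i_def ac_mul_def bilinear_simps algebra_simps)

lemma ac_mul_ac_i_right: "bilinear m \<Longrightarrow> ac_mul m p (ac_i q) = ac_i (ac_mul m p q)"
  by (simp add: ac_i_def ac_mul_def bilinear_simps algebra_simps)

lemma ac_holomorphic_at_stem_prod:
  fixes m :: "'b::euclidean_space \<Rightarrow> 'b \<Rightarrow> 'b"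
  assumes m: "bilinear m" and F: "ac_holomorphic_at F z" and G: "ac_holomorphic_at G z"
  shows "ac_holomorphic_at (stem_prod m F G) z"
proof -
  obtain DF DG where DF: "(F has_derivative DF) (at z)" "DF 1 + ac_i (DF \<i>) = 0"
    and DG: "(G has_derivative DG) (at z)" "DG 1 + ac_i (DG \<i>) = 0"
    using F G by (auto simp: ac_holomorphic_at_def)
  have bb: "bounded_bilinear (ac_mul m)"
    using bilinear_ac_mul[OF m] by (simp add: bilinear_conv_bounded_bilinear)
  let ?DP = "\<lambda>h. ac_mul m (F z) (DG h) + ac_mul m (DF h) (G z)"
  have "(stem_prod m F G has_derivative ?DP) (at z)"
    unfolding stem_prod_def using bounded_bilinear.FDERIV[OF bb DF(1) DG(1)] .
  moreover have "?DP 1 + ac_i (?DP \<i>) =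
      ac_mul m (F z) (DG 1 + ac_i (DG \<i>)) + ac_mul m (DF 1 + ac_i (DF \<i>)) (G z)"
    using bilinear_ac_mul[OF m]
    by (simp add: ac_i_add ac_mul_ac_i_left[OF m] ac_mul_ac_i_right[OF m] bilinear_simps add_ac)
  ultimately show ?thesis
    using DF(2) DG(2) bilinear_ac_mul[OF m]
    by (auto simp: ac_holomorphic_at_def bilinear_simps)
qed

lemma ac_holomorphic_at_stem_cj:
  fixes cj :: "'b::euclidean_space \<Rightarrow> 'b"
  assumes cj: "linear cj" and F: "ac_holomorphic_at F z"
  shows "ac_holomorphic_at (stem_cj cj F) z"
proof -
  obtain DF where DF: "(F has_derivative DF) (at z)" "DF 1 + ac_i (DF \<i>) = 0"
    using F by (auto simp: ac_holomorphic_at_def)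
  have "linear (ac_cj cj)"
    by (rule linearI) (simp_all add: ac_cj_def linear_add[OF cj] linear_scale[OF cj])
  hence bl: "bounded_linear (ac_cj cj)" by (simp add: linear_conv_bounded_linear)
  have "(stem_cj cj F has_derivative (\<lambda>h. ac_cj cj (DF h))) (at z)"
    unfolding stem_cj_def using bounded_linear.has_derivative[OF bl DF(1)] .
  moreover have "ac_cj cj (DF 1) + ac_i (ac_cj cj (DF \<i>)) = ac_cj cj (DF 1 + ac_i (DF \<i>))"
    by (simp add: ac_cj_def ac_i_def linear_add[OF cj] linear_diff[OF cj] linear_neg[OF cj])
  ultimately show ?thesis
    using DF(2) by (auto simp: ac_holomorphic_at_def ac_cj_def zero_prod_def linear_0[OF cj])
qed

lemma ac_holomorphic_at_field_differentiable:
  assumes L: "bounded_linear L" and L_i: "\<And>p. L (ac_i p) = \<i> * L p"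
    and H: "ac_holomorphic_at H z"
  shows "(\<lambda>w. L (H w)) field_differentiable (at z)"
proof -
  obtain DH where DH: "(H has_derivative DH) (at z)" "DH 1 + ac_i (DH \<i>) = 0"
    using H by (auto simp: ac_holomorphic_at_def)
  have d: "((\<lambda>w. L (H w)) has_derivative (\<lambda>h. L (DH h))) (at z)"
    using bounded_linear.has_derivative[OF L DH(1)] .
  have lin: "linear (\<lambda>h. L (DH h))"
    using has_derivative_bounded_linear[OF d] by (simp add: bounded_linear.linear)
  have "L (DH 1 + ac_i (DH \<i>)) = 0"
    using DH(2) linear_0[OF bounded_linear.linear[OF L]] by simp
  hence "L (DH 1) + \<i> * L (DH \<i>) = 0"
    by (simp only: linear_add[OF bounded_linear.linear[OF L]] L_i)
  hence "\<i> * L (DH \<i>) = - L (DH 1)" by (simp add: add_eq_0_iff)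
  hence "\<i> * (\<i> * L (DH \<i>)) = \<i> * - L (DH 1)" by simp
  hence "L (DH \<i>) = \<i> * L (DH 1)" by simp
  hence "L (DH h) = L (DH 1) * h" for h
    using real_linear_complex_multiplication[OF lin, of h] by blast
  hence "(\<lambda>h. L (DH h)) = (*) (L (DH 1))" by blast
  hence "((\<lambda>w. L (H w)) has_field_derivative L (DH 1)) (at z)"
    using d by (simp add: has_field_derivative_def)
  thus ?thesis by (auto simp: field_differentiable_def)
qed

definition ac_to_complex :: "'b::euclidean_space \<Rightarrow> 'b \<times> 'b \<Rightarrow> complex" where
  "ac_to_complex one p = Complex (fst p \<bullet> one / (one \<bullet> one)) (snd p \<bullet> one / (one \<bullet> one))"

lemma bounded_linear_ac_to_complex: "bounded_linear (ac_to_complex one)"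
  unfolding linear_conv_bounded_linear[symmetric]
  by (rule linearI) (simp_all add: ac_to_complex_def complex_eq_iff inner_add_left add_divide_distrib)

lemma ac_to_complex_ac_i: "ac_to_complex one (ac_i p) = \<i> * ac_to_complex one p"
  by (simp add: ac_to_complex_def ac_i_def complex_eq_iff)

lemma ac_to_complex_conj: "ac_to_complex one (fst p, - snd p) = cnj (ac_to_complex one p)"
  by (simp add: ac_to_complex_def complex_eq_iff)

lemma ac_to_complex_real_multiple:
  "one \<noteq> 0 \<Longrightarrow> ac_to_complex one (a *\<^sub>R one, b *\<^sub>R one) = Complex a b"
  by (simp add: ac_to_complex_def)

lemma holomorphic_conj_symmetric_eq_0:
  assumes D: "open D" "slice_domain_D D \<or> product_domain_D D"
    and hol: "c holomorphic_on D" and conj: "\<And>z. z \<in> D \<Longrightarrow> c (cnj z) = cnj (c z)"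
    and U: "open U" "U \<noteq> {}" "U \<subseteq> D" and c_U: "\<And>z. z \<in> U \<Longrightarrow> c z = 0"
    and w: "w \<in> D"
  shows "c w = 0"
proof -
  obtain z1 where z1: "z1 \<in> U" using U by auto
  then obtain r where r: "r > 0" "ball z1 r \<subseteq> U" using U open_contains_ball by blast
  define S where "S = connected_component_set D z1"
  have S: "open S" "connected S" "S \<subseteq> D" "S \<in> components D"
    using D(1) z1 U(3) by (auto simp: S_def open_connected_component connected_component_subset components_iff)
  have "ball z1 r \<subseteq> S"
    unfolding S_def by (rule connected_component_maximal) (use r U(3) in auto)
  hence c_S: "c z = 0" if "z \<in> S" for z
    using analytic_continuation_open[of "ball z1 r" S c "\<lambda>_. 0" z] r S that
      holomorphic_on_subset[OF hol S(3)] c_U subsetD[OF r(2)]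
    by (auto simp: holomorphic_on_const simp del: mem_ball)
  from D(2) show ?thesis
  proof
    assume "slice_domain_D D"
    hence "S = D" using z1 U(3) unfolding S_def slice_domain_D_def
      by (metis connected_component_eq_self subsetD)
    thus ?thesis using c_S w by simp
  next
    assume "product_domain_D D"
    then obtain C where C: "components D = {C, cnj ` C}" by (auto simp: product_domain_D_def)
    have "w \<in> C \<union> cnj ` C" using w Union_components[of D] C by auto
    hence "w \<in> S \<or> cnj w \<in> S" using S(4) C by (auto simp: image_iff)
    thus ?thesis using c_S conj[OF w] by (metis complex_cnj_zero_iff)
  qed
qed

context
  fixes mul :: "'a::euclidean_space \<Rightarrow> 'a \<Rightarrow> 'a" and one :: 'a and cj :: "'a \<Rightarrow> 'a"
  assumes alg: "alt_star_alg mul one cj"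
begin

lemma alt_star_alg_bilinear: "bilinear mul"
  and alt_star_alg_alternative: "alternative mul"
  and alt_star_alg_one_left: "mul one x = x"
  and alt_star_alg_one_right: "mul x one = x"
  and alt_star_alg_linear_cj: "linear cj"
  and alt_star_alg_cj_cj: "cj (cj x) = x"
  and alt_star_alg_cj_mul: "cj (mul x y) = mul (cj y) (cj x)"
  using alg by (auto simp: alt_star_alg_def alternative_def assoc_alg_def)

lemma alt_star_alg_one_nonzero: "one \<noteq> 0"
  using alg by (simp add: alt_star_alg_def)

lemma ac_cj_ac_mul: "ac_cj cj (ac_mul mul p q) = ac_mul mul (ac_cj cj q) (ac_cj cj p)"
  using alt_star_alg_linear_cj
  by (simp add: ac_cj_def ac_mul_def linear_add linear_diff alt_star_alg_cj_mul algebra_simps)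

lemma ac_cj_ac_cj [simp]: "ac_cj cj (ac_cj cj p) = p"
  by (simp add: ac_cj_def alt_star_alg_cj_cj)

lemma ac_cj_zero [simp]: "ac_cj cj 0 = 0"
  by (simp add: ac_cj_def zero_prod_def linear_0[OF alt_star_alg_linear_cj])

lemma ac_cj_eq_0_iff [simp]: "ac_cj cj p = 0 \<longleftrightarrow> p = 0"
  by (metis ac_cj_ac_cj ac_cj_zero)

lemma normal_nonzero_not_zero_divisor:
  assumes N: "ac_mul mul x (ac_cj cj x) = ac_cscale c (one, 0)"
    and N': "ac_mul mul (ac_cj cj x) x = ac_cscale c (one, 0)"
    and "c \<noteq> 0"
    and "ac_mul mul x g = 0 \<or> ac_mul mul g x = 0"
  shows "g = 0"
proof -
  note m = bilinear_ac_mul[OF alt_star_alg_bilinear]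
  note alt = alternative_ac_mul[OF alt_star_alg_bilinear alt_star_alg_alternative]
  have unit_left: "ac_mul mul (one, 0) p = p" and unit_right: "ac_mul mul p (one, 0) = p" for p
    using alt_star_alg_bilinear
    by (simp_all add: ac_mul_def alt_star_alg_one_left alt_star_alg_one_right bilinear_simps)
  note cancel = alternative_invertible_left_cancel[OF m alt unit_left unit_right]
  \<comment> \<open>x^c / c is a two-sided inverse of x; right zero divisors are reduced to left ones
    by the anti-automorphism ac_cj cj.\<close>
  define y where "y = ac_cj cj x"
  define w where "w = inverse c"
  have "w * c = 1" using \<open>c \<noteq> 0\<close> by (simp add: w_def)
  hence inv: "ac_mul mul x (ac_cscale w y) = (one, 0)" "ac_mul mul (ac_cscale w y) x = (one, 0)"
    "ac_mul mul y (ac_cscale w x) = (one, 0)" "ac_mul mul (ac_cscale w x) y = (one, 0)"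
    using N N' alt_star_alg_bilinear
    by (simp_all add: y_def ac_mul_cscale_left ac_mul_cscale_right ac_cscale_ac_cscale)
  show ?thesis
  proof (cases "ac_mul mul x g = 0")
    case True
    then show ?thesis using cancel[OF inv(1,2)] by simp
  next
    case False
    hence "ac_mul mul y (ac_cj cj g) = 0"
      using assms(4) ac_cj_ac_mul[of g x] by (simp add: y_def)
    thus ?thesis using cancel[OF inv(3,4)] ac_cj_eq_0_iff by blast
  qed
qed

lemma sphS_cj: "J \<in> sphS mul one cj \<Longrightarrow> cj J = - J"
  by (simp add: sphS_def trA_def eq_neg_iff_add_eq_0 add.commute)

lemma sphS_square:
  assumes "J \<in> sphS mul one cj"
  shows "mul J J = - one"
proof -
  have "mul J (- J) = one" using assms sphS_cj[OF assms] by (simp add: sphS_def nA_def)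
  hence "- mul J J = one" using alt_star_alg_bilinear by (simp add: bilinear_simps)
  thus ?thesis by (metis minus_minus)
qed

lemma sphS_uminus:
  assumes "J \<in> sphS mul one cj"
  shows "- J \<in> sphS mul one cj"
proof -
  have "cj (- J) = J" using sphS_cj[OF assms] alt_star_alg_linear_cj by (simp add: linear_neg)
  thus ?thesis using sphS_square[OF assms] alt_star_alg_bilinear
    by (simp add: sphS_def trA_def nA_def bilinear_simps)
qed

lemma vanishes_on_iff:
  assumes "sphS mul one cj \<noteq> {}"
  shows "vanishes_on mul one cj D H \<longleftrightarrow> (\<forall>z\<in>D. H z = 0)"
proof
  assume "\<forall>z\<in>D. H z = 0"
  thus "vanishes_on mul one cj D H"
    using alt_star_alg_bilinear by (simp add: vanishes_on_def slice_val_def bilinear_simps)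
next
  note simps = bilinear_simps[OF alt_star_alg_bilinear]
  assume vanish: "vanishes_on mul one cj D H"
  obtain J where J: "J \<in> sphS mul one cj" using assms by auto
  show "\<forall>z\<in>D. H z = 0"
  proof
    fix z assume "z \<in> D"
    obtain a b where H: "H z = (a, b)" by fastforce
    have "slice_val mul H z J = 0" "slice_val mul H z (- J) = 0"
      using vanish \<open>z \<in> D\<close> J sphS_uminus[OF J] by (auto simp: vanishes_on_def)
    hence plus: "a + mul J b = 0" and minus: "a - mul J b = 0"
      by (simp_all add: slice_val_def H simps)
    have "a + a = 0 + 0" using plus minus by (simp add: algebra_simps)
    hence "a = 0" by (rule real_vector_double_cancel)
    \<comment> \<open>J squares to -1, so left multiplication by J is injective\<close>
    moreover have "mul J (mul J b) = - b"
    proof -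
      have "mul J (mul J b) = mul (mul J J) b"
        using alt_star_alg_alternative by (simp add: alternative_def)
      thus ?thesis by (simp add: sphS_square[OF J] simps alt_star_alg_one_left)
    qed
    ultimately have "b = 0" using plus by (simp add: simps)
    with \<open>a = 0\<close> show "H z = 0" by (simp add: H zero_prod_def)
  qed
qed

lemma same_slice_on_iff:
  assumes "sphS mul one cj \<noteq> {}"
  shows "same_slice_on mul one cj D F G \<longleftrightarrow> (\<forall>z\<in>D. F z = G z)"
proof -
  have "same_slice_on mul one cj D F G \<longleftrightarrow> vanishes_on mul one cj D (\<lambda>z. F z - G z)"
    using alt_star_alg_bilinear
    by (simp add: same_slice_on_def vanishes_on_def slice_val_def bilinear_simps algebra_simps)
  thus ?thesis using vanishes_on_iff[OF assms] by simp
qed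

lemma stem_on_stem_N: "stem_on D F \<Longrightarrow> stem_on D (stem_N mul cj F)"
  using alt_star_alg_bilinear alt_star_alg_linear_cj
  by (simp add: stem_on_def stem_N_def stem_prod_def stem_cj_def ac_mul_def ac_cj_def
      bilinear_simps linear_neg)

lemma regular_stem_on_N_holomorphic:
  assumes "regular_stem_on D F" "open D"
  shows "(\<lambda>z. ac_to_complex one (stem_N mul cj F z)) holomorphic_on D"
proof -
  have "ac_holomorphic_at (stem_N mul cj F) z" if "z \<in> D" for z
    unfolding stem_N_def
    using regular_stem_on_ac_holomorphic_at[OF assms(1) that]
    by (intro ac_holomorphic_at_stem_prod[OF alt_star_alg_bilinear]
        ac_holomorphic_at_stem_cj[OF alt_star_alg_linear_cj])
  hence "(\<lambda>w. ac_to_complex one (stem_N mul cj F w)) field_differentiable (at z)" if "z \<in> D" for z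
    using that by (intro ac_holomorphic_at_field_differentiable[OF bounded_linear_ac_to_complex
          ac_to_complex_ac_i])
  thus ?thesis unfolding holomorphic_on_def using field_differentiable_at_within by blast
qed

lemma tame_stem_N_real_multiple:
  assumes "tame_stem mul one cj D F" "z \<in> D"
  obtains a b where "stem_N mul cj F z = (a *\<^sub>R one, b *\<^sub>R one)"
  using assms unfolding tame_stem_def slice_preserving_stem_def prod_eq_iff by fastforce

lemma tame_stem_N_eq_0_iff:
  assumes "tame_stem mul one cj D F" "z \<in> D"
  shows "stem_N mul cj F z = 0 \<longleftrightarrow> ac_to_complex one (stem_N mul cj F z) = 0"
proof -
  obtain a b where "stem_N mul cj F z = (a *\<^sub>R one, b *\<^sub>R one)"
    using tame_stem_N_real_multiple[OF assms] .
  thus ?thesis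
    using alt_star_alg_one_nonzero
    by (simp add: ac_to_complex_real_multiple complex_eq_iff zero_prod_def)
qed

lemma tame_stem_not_zero_divisor:
  assumes sph: "sphS mul one cj \<noteq> {}" and tame: "tame_stem mul one cj D F" and z: "z \<in> D"
    and N: "stem_N mul cj F z \<noteq> 0"
    and "ac_mul mul (F z) g = 0 \<or> ac_mul mul g (F z) = 0"
  shows "g = 0"
proof -
  obtain a b where ab: "stem_N mul cj F z = (a *\<^sub>R one, b *\<^sub>R one)"
    using tame_stem_N_real_multiple[OF tame z] .
  have "stem_N mul cj (stem_cj cj F) z = stem_N mul cj F z"
    using tame z same_slice_on_iff[OF sph] by (simp add: tame_stem_def)
  hence "ac_mul mul (ac_cj cj (F z)) (F z) = ac_cscale (Complex a b) (one, 0)"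
    using ab by (simp add: stem_N_def stem_prod_def stem_cj_def ac_cscale_def ac_cj_ac_cj)
  moreover have "ac_mul mul (F z) (ac_cj cj (F z)) = ac_cscale (Complex a b) (one, 0)"
    using ab by (simp add: stem_N_def stem_prod_def stem_cj_def ac_cscale_def)
  moreover have "Complex a b \<noteq> 0" using N ab by (auto simp: complex_eq_iff zero_prod_def)
  ultimately show ?thesis using normal_nonzero_not_zero_divisor assms(5) by blast
qed

end

theorem proposition5p18:
  fixes mul :: "'a::euclidean_space \<Rightarrow> 'a \<Rightarrow> 'a"
    and one :: 'a and cj :: "'a \<Rightarrow> 'a"
    and D :: "complex set"
    and F :: "complex \<Rightarrow> 'a \<times> 'a"
  assumes alg: "alt_star_alg mul one cj"
    and sph: "sphS mul one cj \<noteq> {}"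
    and D: "admissible_D D"
    and dom: "slice_domain_D D \<or> product_domain_D D"
    and f_reg: "regular_stem_on D F"
    and f_tame: "tame_stem mul one cj D F"
    and Nf: "\<not> vanishes_on mul one cj D (stem_N mul cj F)"
  shows "\<forall>G. cont_stem_on D G \<longrightarrow>
           (vanishes_on mul one cj D (stem_prod mul F G) \<or>
            vanishes_on mul one cj D (stem_prod mul G F)) \<longrightarrow>
           vanishes_on mul one cj D G"
proof (intro allI impI)
  fix G assume G: "cont_stem_on D G"
    and FG: "vanishes_on mul one cj D (stem_prod mul F G) \<or> vanishes_on mul one cj D (stem_prod mul G F)"
  note vanishes_iff = vanishes_on_iff[OF alg sph]
  define c where "c z = ac_to_complex one (stem_N mul cj F z)" for z
  have "open D" using D by (simp add: admissible_D_def)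
  have hol: "c holomorphic_on D"
    unfolding c_def using regular_stem_on_N_holomorphic[OF alg f_reg \<open>open D\<close>] .
  have conj: "c (cnj z) = cnj (c z)" if "z \<in> D" for z
    using stem_on_stem_N[OF alg, of D F] f_reg that
    by (simp add: c_def stem_on_def regular_stem_on_def ac_to_complex_conj)
  show "vanishes_on mul one cj D G"
  proof (rule ccontr)
    assume "\<not> vanishes_on mul one cj D G"
    then obtain z1 where z1: "z1 \<in> D" "G z1 \<noteq> 0" by (auto simp: vanishes_iff)
    define U where "U = D \<inter> G -` (- {0})"
    have "open U"
      using G \<open>open D\<close> by (auto simp: U_def cont_stem_on_def intro: continuous_open_preimage)
    have "c z = 0" if "z \<in> U" for z
      using that FG tame_stem_not_zero_divisor[OF alg sph f_tame, of z "G z"]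
        tame_stem_N_eq_0_iff[OF alg f_tame, of z]
      by (auto simp: U_def c_def vanishes_iff stem_prod_def)
    hence "c z = 0" if "z \<in> D" for z
      using holomorphic_conj_symmetric_eq_0[OF \<open>open D\<close> dom hol conj \<open>open U\<close>] z1 that
      by (auto simp: U_def)
    thus False
      using Nf tame_stem_N_eq_0_iff[OF alg f_tame] by (auto simp: vanishes_iff c_def)
  qed
qed

end
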